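(* Let $A$ be a two-dimensional evolution algebra over a field $\mathbb{K}$ with $A^2=A$. Then $A$ satisfies a nontrivial $3$-linear identity $w(x,y,z)=\lambda_1(xy)z+\lambda_2(yz)x+\lambda_3(zx)y$ (with $(\lambda_1,\lambda_2,\lambda_3)\neq(0,0,0)$) if and only if $A$ is isomorphic to $A_1$; and the $3$-linear identities satisfied by $A_1$ are exactly those with $\lambda_1+\lambda_2+\lambda_3=0$, i.e. those following from the associative identity $(xy)z=x(yz)$.
   Context: An evolution algebra over $\mathbb{K}$ is a $\mathbb{K}$-algebra with a basis $\{e_i\}$ (natural basis) such that $e_ie_j=0$ for $i\neq j$; evolution algebras are commutative. In the free nonassociative commutative algebra on generators $X$, a $3$-linear element in distinct generators $x,y,z$ has the form $w(x,y,z)=\lambda_1(xy)z+\lambda_2(yz)x+\lambda_3(zx)y$, $\lambda_i\in\mathbb{K}$; $A$ satisfies $w$ if $w(a,b,c)=0$ for all $a,b,c\in A$. $A_1$ is the evolution algebra with natural basis $\{e_1,e_2\}$, $e_1^2=e_1$, $e_2^2=e_2$. *)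

theory Defs
  imports Main
begin

text \<open>A two-dimensional algebra over a field 'k is modelled on the coordinate
space 'k x 'k (every 2-dimensional 'k-vector space is isomorphic to it) together
with a bilinear multiplication.\<close>

type_synonym 'k pt = "'k \<times> 'k"

definition padd :: "'k::field pt \<Rightarrow> 'k pt \<Rightarrow> 'k pt" where
  "padd u v = (fst u + fst v, snd u + snd v)"

definition psmul :: "'k::field \<Rightarrow> 'k pt \<Rightarrow> 'k pt" where
  "psmul c u = (c * fst u, c * snd u)"

definition pzero :: "'k::field pt" where
  "pzero = (0, 0)"

definition bilinear_mult :: "('k::field pt \<Rightarrow> 'k pt \<Rightarrow> 'k pt) \<Rightarrow> bool" where
  "bilinear_mult m \<longleftrightarrow>
     (\<forall>x y z. m (padd x y) z = padd (m x z) (m y z)) \<and>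
     (\<forall>x y z. m x (padd y z) = padd (m x y) (m x z)) \<and>
     (\<forall>c x y. m (psmul c x) y = psmul c (m x y)) \<and>
     (\<forall>c x y. m x (psmul c y) = psmul c (m x y))"

definition lin_indep2 :: "'k::field pt \<Rightarrow> 'k pt \<Rightarrow> bool" where
  "lin_indep2 e1 e2 \<longleftrightarrow>
     (\<forall>a b. padd (psmul a e1) (psmul b e2) = pzero \<longrightarrow> a = 0 \<and> b = 0)"

definition evolution_algebra2 :: "('k::field pt \<Rightarrow> 'k pt \<Rightarrow> 'k pt) \<Rightarrow> bool" where
  "evolution_algebra2 m \<longleftrightarrow> bilinear_mult m \<and>
     (\<exists>e1 e2. lin_indep2 e1 e2 \<and> m e1 e2 = pzero \<and> m e2 e1 = pzero)"

inductive_set square_span :: "('k::field pt \<Rightarrow> 'k pt \<Rightarrow> 'k pt) \<Rightarrow> 'k pt set"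
  for m where
    prod: "m x y \<in> square_span m"
  | zero: "pzero \<in> square_span m"
  | add: "u \<in> square_span m \<Longrightarrow> v \<in> square_span m \<Longrightarrow> padd u v \<in> square_span m"
  | smul: "u \<in> square_span m \<Longrightarrow> psmul c u \<in> square_span m"

text \<open>The algebra A_1: natural basis e1=(1,0), e2=(0,1), e1^2=e1, e2^2=e2.\<close>
definition A1_mult :: "'k::field pt \<Rightarrow> 'k pt \<Rightarrow> 'k pt" where
  "A1_mult x y = (fst x * fst y, snd x * snd y)"

definition alg_isomorphic ::
  "('k::field pt \<Rightarrow> 'k pt \<Rightarrow> 'k pt) \<Rightarrow> ('k pt \<Rightarrow> 'k pt \<Rightarrow> 'k pt) \<Rightarrow> bool" where
  "alg_isomorphic m m' \<longleftrightarrow> (\<exists>f. bij f \<and>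
     (\<forall>x y. f (padd x y) = padd (f x) (f y)) \<and>
     (\<forall>c x. f (psmul c x) = psmul c (f x)) \<and>
     (\<forall>x y. f (m x y) = m' (f x) (f y)))"

definition w3 :: "('k::field pt \<Rightarrow> 'k pt \<Rightarrow> 'k pt) \<Rightarrow> 'k \<Rightarrow> 'k \<Rightarrow> 'k \<Rightarrow>
                    'k pt \<Rightarrow> 'k pt \<Rightarrow> 'k pt \<Rightarrow> 'k pt" where
  "w3 m l1 l2 l3 a b c =
     padd (padd (psmul l1 (m (m a b) c)) (psmul l2 (m (m b c) a))) (psmul l3 (m (m c a) b))"

definition satisfies_w3 :: "('k::field pt \<Rightarrow> 'k pt \<Rightarrow> 'k pt) \<Rightarrow> 'k \<Rightarrow> 'k \<Rightarrow> 'k \<Rightarrow> bool" where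
  "satisfies_w3 m l1 l2 l3 \<longleftrightarrow> (\<forall>a b c. w3 m l1 l2 l3 a b c = pzero)"

end

theory Submission
  imports Defs
begin

text \<open>Write e1 e1 = a e1 + b e2 and e2 e2 = c e1 + d e2 in a natural basis. A nontrivial
3-linear identity, evaluated at the three arrangements of (e1, e1, e2), isolates one coefficient
each time and forces (e1 e1) e2 = b (e2 e2) = 0; symmetrically (e2 e2) e1 = c (e1 e1) = 0. Since
A^2 = A makes the structure matrix invertible, b = c = 0 and a, d \<noteq> 0, and rescaling the basis
by a and d gives A_1.
Conversely A_1 is associative and commutative, so it satisfies w exactly when
l1 + l2 + l3 = 0, and identities are transported along isomorphisms.\<close>

lemma psmul_eq_pzero_iff: "psmul c x = pzero \<longleftrightarrow> c = 0 \<or> x = pzero"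
  by (cases x) (auto simp: psmul_def pzero_def)

lemma bilinear_mult_pzero_left:
  assumes "bilinear_mult m"
  shows "m pzero x = pzero"
proof -
  have "m (psmul 0 pzero) x = psmul 0 (m pzero x)"
    using assms unfolding bilinear_mult_def by blast
  then show ?thesis by (simp add: psmul_def pzero_def)
qed

lemma nontrivial_w3_annihilates_square:
  assumes bil: "bilinear_mult m" and uv: "m u v = pzero" and vu: "m v u = pzero"
    and sat: "satisfies_w3 m l1 l2 l3" and nontriv: "(l1, l2, l3) \<noteq> (0, 0, 0)"
  shows "m (m u u) v = pzero"
proof -
  have psmul_pzero: "psmul c pzero = pzero" for c :: 'a
    by (simp add: psmul_def pzero_def)
  have padd_pzero: "padd x pzero = x" "padd pzero x = x" for x :: "'a pt"
    by (simp_all add: padd_def pzero_def)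
  have zero_prod: "m pzero x = pzero" for x
    using bil by (rule bilinear_mult_pzero_left)
  have "w3 m l1 l2 l3 u u v = psmul l1 (m (m u u) v)"
    and "w3 m l1 l2 l3 v u u = psmul l2 (m (m u u) v)"
    and "w3 m l1 l2 l3 u v u = psmul l3 (m (m u u) v)"
    by (simp_all add: w3_def uv vu zero_prod psmul_pzero padd_pzero)
  then have "psmul l (m (m u u) v) = pzero" if "l \<in> {l1, l2, l3}" for l
    using sat that unfolding satisfies_w3_def by fastforce
  moreover obtain l where "l \<in> {l1, l2, l3}" "l \<noteq> 0"
    using nontriv by auto
  ultimately show ?thesis
    by (auto simp: psmul_eq_pzero_iff)
qed

lemma w3_A1_mult:
  "w3 A1_mult l1 l2 l3 a b c = psmul (l1 + l2 + l3) (A1_mult (A1_mult a b) c)"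
  by (simp add: w3_def A1_mult_def padd_def psmul_def algebra_simps)

lemma satisfies_w3_A1_mult_iff:
  "satisfies_w3 (A1_mult :: 'k::field pt \<Rightarrow> 'k pt \<Rightarrow> 'k pt) l1 l2 l3 \<longleftrightarrow> l1 + l2 + l3 = 0"
proof -
  have "A1_mult (A1_mult (1, 1) (1, 1)) (1, 1) \<noteq> (pzero :: 'k pt)"
    by (simp add: A1_mult_def pzero_def)
  then show ?thesis
    unfolding satisfies_w3_def w3_A1_mult psmul_eq_pzero_iff by blast
qed

lemma alg_isomorphic_satisfies_w3:
  assumes iso: "alg_isomorphic m m'" and sat: "satisfies_w3 m' l1 l2 l3"
  shows "satisfies_w3 m l1 l2 l3"
proof -
  obtain f where "bij f" and f_add: "\<And>x y. f (padd x y) = padd (f x) (f y)"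
    and f_smul: "\<And>c x. f (psmul c x) = psmul c (f x)"
    and f_mult: "\<And>x y. f (m x y) = m' (f x) (f y)"
    using iso unfolding alg_isomorphic_def by blast
  have "f pzero = pzero"
    using f_smul[of 0 pzero] by (simp add: psmul_def pzero_def)
  moreover have "f (w3 m l1 l2 l3 a b c) = w3 m' l1 l2 l3 (f a) (f b) (f c)" for a b c
    by (simp only: w3_def f_add f_smul f_mult)
  ultimately have "f (w3 m l1 l2 l3 a b c) = f pzero" for a b c
    using sat unfolding satisfies_w3_def by simp
  then show ?thesis
    using \<open>bij f\<close> unfolding satisfies_w3_def bij_def by (simp add: inj_eq)
qed

locale evolution_basis =
  fixes m :: "'k::field pt \<Rightarrow> 'k pt \<Rightarrow> 'k pt" and e1 e2 :: "'k pt"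
  assumes bilinear: "bilinear_mult m" and indep: "lin_indep2 e1 e2"
    and e1_e2: "m e1 e2 = pzero" and e2_e1: "m e2 e1 = pzero"
begin

abbreviation "sq1 \<equiv> m e1 e1"
abbreviation "sq2 \<equiv> m e2 e2"

definition det :: 'k where
  "det = fst e1 * snd e2 - snd e1 * fst e2"

text \<open>Coordinates in the basis e1, e2, by Cramer's rule.\<close>

definition coord1 :: "'k pt \<Rightarrow> 'k" where
  "coord1 x = (snd e2 * fst x - fst e2 * snd x) / det"

definition coord2 :: "'k pt \<Rightarrow> 'k" where
  "coord2 x = (fst e1 * snd x - snd e1 * fst x) / det"

lemma det_nonzero: "det \<noteq> 0"
proof
  assume "det = 0"
  then have "padd (psmul (snd e2) e1) (psmul (- snd e1) e2) = pzero"
    and "padd (psmul (fst e2) e1) (psmul (- fst e1) e2) = pzero"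
    by (simp_all add: det_def padd_def psmul_def pzero_def algebra_simps)
  then have "snd e1 = 0" "fst e1 = 0"
    using indep unfolding lin_indep2_def by (metis neg_equal_0_iff_equal)+
  then have "e1 = pzero"
    by (cases e1) (simp add: pzero_def)
  then have "padd (psmul 1 e1) (psmul 0 e2) = pzero"
    by (simp add: padd_def psmul_def pzero_def)
  then show False
    using indep unfolding lin_indep2_def by force
qed

lemma coord_decomp: "padd (psmul (coord1 x) e1) (psmul (coord2 x) e2) = x"
proof -
  obtain p q r s x1 x2 where e: "e1 = (p, q)" "e2 = (r, s)" and x: "x = (x1, x2)"
    by (cases e1, cases e2, cases x) auto
  have D: "p * s - q * r \<noteq> 0"
    using det_nonzero unfolding det_def by (simp add: e)
  have "(s * x1 - r * x2) * p + (p * x2 - q * x1) * r = x1 * (p * s - q * r)"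
    and "(s * x1 - r * x2) * q + (p * x2 - q * x1) * s = x2 * (p * s - q * r)"
    by (simp_all add: algebra_simps)
  with D show ?thesis
    unfolding coord1_def coord2_def det_def unfolding e x
    by (simp add: padd_def psmul_def times_divide_eq_left add_divide_distrib[symmetric])
qed

lemma pt_eq_iff_coords: "x = y \<longleftrightarrow> coord1 x = coord1 y \<and> coord2 x = coord2 y"
  by (metis coord_decomp)

lemma coord1_padd [simp]: "coord1 (padd x y) = coord1 x + coord1 y"
  and coord2_padd [simp]: "coord2 (padd x y) = coord2 x + coord2 y"
  and coord1_psmul [simp]: "coord1 (psmul c x) = c * coord1 x"
  and coord2_psmul [simp]: "coord2 (psmul c x) = c * coord2 x"
  and coord1_pzero [simp]: "coord1 pzero = 0"
  and coord2_pzero [simp]: "coord2 pzero = 0"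
  by (simp_all add: coord1_def coord2_def padd_def psmul_def pzero_def
      add_divide_distrib[symmetric] algebra_simps)

lemma coord1_e1 [simp]: "coord1 e1 = 1"
  and coord2_e1 [simp]: "coord2 e1 = 0"
  and coord1_e2 [simp]: "coord1 e2 = 0"
  and coord2_e2 [simp]: "coord2 e2 = 1"
  using det_nonzero by (simp_all add: coord1_def coord2_def det_def algebra_simps)

lemma mult_eq: "m x y = padd (psmul (coord1 x * coord1 y) sq1) (psmul (coord2 x * coord2 y) sq2)"
proof -
  have add_left: "m (padd x y) z = padd (m x z) (m y z)"
    and add_right: "m x (padd y z) = padd (m x y) (m x z)"
    and smul_left: "m (psmul c x) y = psmul c (m x y)"
    and smul_right: "m x (psmul c y) = psmul c (m x y)" for x y z c
    using bilinear unfolding bilinear_mult_def by blast+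
  have "m (padd (psmul a e1) (psmul b e2)) (padd (psmul c e1) (psmul d e2))
      = padd (psmul (a * c) sq1) (psmul (b * d) sq2)" for a b c d
    by (simp only: add_left add_right smul_left smul_right e1_e2 e2_e1)
      (simp add: padd_def psmul_def pzero_def algebra_simps)
  then show ?thesis
    by (metis coord_decomp)
qed

lemma coord1_mult:
    "coord1 (m x y) = coord1 x * coord1 y * coord1 sq1 + coord2 x * coord2 y * coord1 sq2"
  and coord2_mult:
    "coord2 (m x y) = coord1 x * coord1 y * coord2 sq1 + coord2 x * coord2 y * coord2 sq2"
  by (subst mult_eq; simp)+

lemma square_span_subset_span_squares:
  "v \<in> square_span m \<Longrightarrow> \<exists>a b. v = padd (psmul a sq1) (psmul b sq2)"
proof (induction rule: square_span.induct)
  case (prod x y)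
  then show ?case
    using mult_eq by blast
next
  case zero
  have "pzero = padd (psmul 0 sq1) (psmul 0 sq2)"
    by (simp add: padd_def psmul_def pzero_def)
  then show ?case by blast
next
  case (add u v)
  then obtain a b c d
    where "u = padd (psmul a sq1) (psmul b sq2)" "v = padd (psmul c sq1) (psmul d sq2)"
    by blast
  then have "padd u v = padd (psmul (a + c) sq1) (psmul (b + d) sq2)"
    by (simp add: padd_def psmul_def algebra_simps)
  then show ?case by blast
next
  case (smul u c)
  then obtain a b where "u = padd (psmul a sq1) (psmul b sq2)"
    by blast
  then have "psmul c u = padd (psmul (c * a) sq1) (psmul (c * b) sq2)"
    by (simp add: padd_def psmul_def algebra_simps)
  then show ?case by blast
qed

lemma structure_det_nonzero:
  assumes "square_span m = UNIV"
  shows "coord1 sq1 * coord2 sq2 - coord2 sq1 * coord1 sq2 \<noteq> 0"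
proof
  assume singular: "coord1 sq1 * coord2 sq2 - coord2 sq1 * coord1 sq2 = 0"
  obtain a b c d where e1: "padd (psmul a sq1) (psmul b sq2) = e1"
    and e2: "padd (psmul c sq1) (psmul d sq2) = e2"
    using assms square_span_subset_span_squares by (metis UNIV_I)
  have "coord1 (padd (psmul a sq1) (psmul b sq2)) * coord2 (padd (psmul c sq1) (psmul d sq2))
      - coord2 (padd (psmul a sq1) (psmul b sq2)) * coord1 (padd (psmul c sq1) (psmul d sq2))
      = (a * d - b * c) * (coord1 sq1 * coord2 sq2 - coord2 sq1 * coord1 sq2)"
    by (simp add: algebra_simps)
  then have "coord1 e1 * coord2 e2 - coord2 e1 * coord1 e2
      = (a * d - b * c) * (coord1 sq1 * coord2 sq2 - coord2 sq1 * coord1 sq2)"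
    by (simp only: e1 e2)
  then show False
    using singular by simp
qed

lemma isomorphic_A1_if_diagonal:
  assumes "coord2 sq1 = 0" "coord1 sq2 = 0" and a: "coord1 sq1 \<noteq> 0" and d: "coord2 sq2 \<noteq> 0"
  shows "alg_isomorphic m A1_mult"
proof -
  define f where "f x = (coord1 sq1 * coord1 x, coord2 sq2 * coord2 x)" for x
  have "inj f"
  proof (rule injI)
    fix x y
    assume "f x = f y"
    then have "coord1 x = coord1 y" "coord2 x = coord2 y"
      using a d by (simp_all add: f_def)
    then show "x = y"
      using pt_eq_iff_coords by blast
  qed
  moreover have "z = f (padd (psmul (fst z / coord1 sq1) e1) (psmul (snd z / coord2 sq2) e2))" for z
    using a d by (simp add: f_def)
  then have "surj f"
    by blast
  moreover have "f (padd x y) = padd (f x) (f y)" for x y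
    unfolding f_def coord1_padd coord2_padd by (simp add: padd_def distrib_left)
  moreover have "f (psmul c x) = psmul c (f x)" for c x
    unfolding f_def coord1_psmul coord2_psmul by (simp add: psmul_def)
  moreover have "f (m x y) = A1_mult (f x) (f y)" for x y
    using assms(1,2) by (simp add: f_def A1_mult_def coord1_mult[of x y] coord2_mult[of x y])
  ultimately show ?thesis
    unfolding alg_isomorphic_def bij_def by blast
qed

lemma isomorphic_A1_if_nontrivial_w3:
  assumes span: "square_span m = UNIV"
    and "satisfies_w3 m l1 l2 l3" "(l1, l2, l3) \<noteq> (0, 0, 0)"
  shows "alg_isomorphic m A1_mult"
proof -
  have structure_det: "coord1 sq1 * coord2 sq2 - coord2 sq1 * coord1 sq2 \<noteq> 0"
    using span by (rule structure_det_nonzero)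
  then have "sq1 \<noteq> pzero" "sq2 \<noteq> pzero"
    by auto
  moreover have "m sq1 e2 = psmul (coord2 sq1) sq2" "m sq2 e1 = psmul (coord1 sq2) sq1"
    by (simp_all add: mult_eq[of sq1 e2] mult_eq[of sq2 e1] padd_def psmul_def)
  moreover have "m sq1 e2 = pzero" "m sq2 e1 = pzero"
    using nontrivial_w3_annihilates_square bilinear e1_e2 e2_e1 assms(2,3) by blast+
  ultimately have "coord2 sq1 = 0" "coord1 sq2 = 0"
    by (metis psmul_eq_pzero_iff)+
  with structure_det show ?thesis
    by (intro isomorphic_A1_if_diagonal) simp_all
qed

end

theorem proposition4p1:
  fixes m :: "'k::field pt \<Rightarrow> 'k pt \<Rightarrow> 'k pt"
  assumes "evolution_algebra2 m"
    and "square_span m = UNIV"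
  shows "((\<exists>l1 l2 l3. (l1, l2, l3) \<noteq> (0, 0, 0) \<and> satisfies_w3 m l1 l2 l3)
            \<longleftrightarrow> alg_isomorphic m A1_mult)
       \<and> (\<forall>l1 l2 l3. satisfies_w3 (A1_mult :: 'k pt \<Rightarrow> 'k pt \<Rightarrow> 'k pt) l1 l2 l3
            \<longleftrightarrow> l1 + l2 + l3 = 0)"
proof -
  obtain e1 e2 where "evolution_basis m e1 e2"
    using assms(1) unfolding evolution_algebra2_def evolution_basis_def by blast
  then have "alg_isomorphic m A1_mult"
    if "(l1, l2, l3) \<noteq> (0, 0, 0)" "satisfies_w3 m l1 l2 l3" for l1 l2 l3
    using evolution_basis.isomorphic_A1_if_nontrivial_w3 assms(2) that by blast
  moreover have "satisfies_w3 m 1 (-1) 0" if "alg_isomorphic m A1_mult"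
    using alg_isomorphic_satisfies_w3 that satisfies_w3_A1_mult_iff by fastforce
  ultimately show ?thesis
    using satisfies_w3_A1_mult_iff by (metis zero_neq_one prod.inject)
qed

end
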